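(* Let $H_\alpha(k)$, $k\in\mathbb T^d$, be the fiber magnetic Schrödinger operator, and let $k_o$ and $\mathcal P$ be as in the context. Then for each $n\in\mathbb N$ and $k\in\mathbb T^d$: $$\operatorname{Tr}\big(H_0^n(k)-H_\alpha^n(k+k_o)\big)=\sum_{\mathbf c\in\widetilde{\mathcal C}_n}\omega(\mathbf c)\mathcal S(\mathbf c,k),\qquad \mathcal S(\mathbf c,k)=2\sin\frac{\alpha(\mathcal P\mathbf c)}2\sin\Big(\frac{\alpha(\mathcal P\mathbf c)}2+\langle\tau(\mathbf c),k\rangle\Big);$$ $$\operatorname{Tr}\big(H_0^n(k)-H_\alpha^n(k+k_o)\big)=\sum_{\mathrm m\in\mathbb Z^d,\|\mathrm m\|\le n\tau_+}\mathfrak t_{\alpha,n,\mathrm m}e^{-i\langle\mathrm m,k\rangle},\qquad \mathfrak t_{\alpha,n,\mathrm m}=\sum_{\mathbf c\in\widetilde{\mathcal C}_n^{\mathrm m}}\omega(\mathbf c)\big(1-e^{-i\alpha(\mathcal P\mathbf c)}\big);$$ $$\frac1{(2\pi)^d}\int_{\mathbb T^d}\operatorname{Tr}\big(H_0^n(k)-H_\alpha^n(k)\big)dk=\mathfrak t_{\alpha,n,0}=2\sum_{\mathbf c\in\widetilde{\mathcal C}_n^0}\omega(\mathbf c)\sin^2\frac{\alpha(\mathbf c)}2.$$ In particular, $$\operatorname{Tr}\big(H_0(k)-H_\alpha(k+k_o)\big)=\sum_{\mathbf c\in\mathcal C_1}\mathcal S(\mathbf c,k),\qquad \operatorname{Tr}\big(H_0^2(k)-H_\alpha^2(k+k_o)\big)=2\sum_{\mathbf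 c\in\mathcal C_1}v_{x_{\mathbf c}}\mathcal S(\mathbf c,k)+\sum_{\mathbf c\in\mathcal C_2}\mathcal S(\mathbf c,k),$$ $$\frac1{(2\pi)^d}\int_{\mathbb T^d}\operatorname{Tr}\big(H_0(k)-H_\alpha(k)\big)dk=2\sum_{\mathbf c\in\mathcal C_1^0}\sin^2\frac{\alpha(\mathbf c)}2\ge0,$$ $$\frac1{(2\pi)^d}\int_{\mathbb T^d}\operatorname{Tr}\big(H_0^2(k)-H_\alpha^2(k)\big)dk=4\sum_{\mathbf c\in\mathcal C_1^0}v_{x_{\mathbf c}}\sin^2\frac{\alpha(\mathbf c)}2+2\sum_{\mathbf c\in\mathcal C_2^0}\sin^2\frac{\alpha(\mathbf c)}2,$$ where $x_{\mathbf c}$ is the unique vertex of $\mathbf c\in\mathcal C_1$ and $v_x=V_x-\varkappa_x$.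
   Context: Let $\Gamma\subset\mathbb R^d$ be a lattice with basis $\mathfrak a_1,\dots,\mathfrak a_d$ and fundamental cell $\Omega=\{\sum_sx_s\mathfrak a_s:(x_s)\in[0,1)^d\}$. Let $\mathcal G=(\mathcal V,\mathcal E)$ be a connected, locally finite, infinite graph embedded in $\mathbb R^d$ (loops, multiple edges allowed), invariant under $\Gamma$-translations, with finite quotient $\mathcal G_*=(\mathcal V_*,\mathcal E_* )$; $\nu=\#\mathcal V_*$; $\beta=\#\mathcal E_*-\#\mathcal V_*+1$. Oriented edges $\mathcal A_*$; $\underline{\mathbf e}$ inverse; $\varkappa_x$ = number of oriented edges starting at $x$. Edge index: $x=x_0+[x]$, $x_0\in\mathcal V\cap\Omega$, $[x]\in\Gamma$ with coordinates $[x]_{\mathbb A}\in\mathbb Z^d$; $\tau((x,y))=[y]_{\mathbb A}-[x]_{\mathbb A}$, defined on $\mathcal A_*$; $\tau_+=\max_{\mathcal A_*}\|\tau(\mathbf e)\|$. Periodic magnetic potential $\alpha$ on oriented edges ($\alpha(\underline{\mathbf e})=-\alpha(\mathbf e)$, $\Gamma$-invariant); $V$ real $\Gamma$-periodic. Fiber operator for $k\in\mathbb T^d=\mathbb R^d/(2\pi\mathbb Z)^d$: $H_\alpha(k)=A_\alpha(k)-\varkappa+V$ on $\mathbb C^\nu$, $(A_\alpha(k)f)_x=\sum_{\mathbf e=(x,y)\in\mathcal A_*}e^{i(\alpha(\mathbf e)+\langle\tau(\mathbf e),k\rangle)}f_y$; $H_0(k)$ is the case $\alpha=0$. Cycles: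 ordered sequences of oriented edges $(\mathbf e_1,\dots,\mathbf e_n)$, $\mathbf e_s=(x_{s-1},x_s)$, $x_n=x_0$ (cyclic shifts distinct; backtracking allowed); index $\tau(\mathbf c)=\sum\tau(\mathbf e)$, flux $\alpha(\mathbf c)=(\sum\alpha(\mathbf e))\bmod2\pi$, both additive on the integer cycle space. $\mathcal C_n$, $\mathcal C_n^0$: cycles of $\mathcal G_*$ of length $n$ (with zero index). Modified graph $\widetilde{\mathcal G}_*$: add at each $x$ one oriented loop $\mathbf e_x$ (single oriented edge) with $\tau=0$, $\alpha=0$; $\omega(\mathbf e)=1$ on $\mathcal A_*$, $\omega(\mathbf e_x)=v_x$, $\omega(\mathbf c)=\prod\omega(\mathbf e_s)$; $\widetilde{\mathcal C}$ its cycle space, $\widetilde{\mathcal C}_n,\widetilde{\mathcal C}_n^{\mathrm m}$ its cycles of length $n$ (and index $\mathrm m$). Fix a basis $\mathbf c_1,\dots,\mathbf c_\beta$ of the integer cycle space of $\mathcal G_*$ with $\tau(\mathbf c_1),\dots,\tau(\mathbf c_d)$ the standard basis of $\mathbb Z^d$ and $\mathbf c_{d+1},\dots,\mathbf c_\beta$ a basis of the zero-index cycles $\mathcal C^0$; then $\{\mathbf c_s\}\cup\{\mathbf e_x\}$ is a basis of $\widetilde{\mathcal C}$, each $\mathbf c\in\widetilde{\mathcal C}$ is uniquely $\sum_s n_s(\mathbf c)\mathbf c_s+\sum_x n_x(\mathbf c)\mathbf e_x$ ($n_s,n_x\in\mathbb Z$), and $\mathcal P\mathbf c=\sum_{s=d+1}^\beta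 n_s(\mathbf c)\mathbf c_s$. Set $k_o=-(\alpha(\mathbf c_1),\dots,\alpha(\mathbf c_d))$. *)

theory Defs
  imports "HOL-Analysis.Analysis"
begin

primrec mpow :: "'a::semiring_1^'n^'n \<Rightarrow> nat \<Rightarrow> 'a^'n^'n" where
  "mpow A 0 = mat 1"
| "mpow A (Suc n) = A ** mpow A n"

(* ---------- the quotient graph G_* ----------
   vertices: finite type 'v (V_* ), oriented edges: finite type 'e (A_* ),
   src/tgt: start/end vertex, rv: the inverse oriented edge,
   tau: the edge index in Z^d (d = CARD('d)), al: magnetic potential. *)

definition periodic_graph ::
  "('e::finite \<Rightarrow> 'v::finite) \<Rightarrow> ('e \<Rightarrow> 'v) \<Rightarrow> ('e \<Rightarrow> 'e) \<Rightarrow> ('e \<Rightarrow> int^'d::finite) \<Rightarrow> ('e \<Rightarrow> real) \<Rightarrow> bool" where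
  "periodic_graph src tgt rv tau al \<longleftrightarrow>
     (\<forall>e. rv (rv e) = e \<and> rv e \<noteq> e \<and> src (rv e) = tgt e \<and> tgt (rv e) = src e
          \<and> tau (rv e) = - tau e \<and> al (rv e) = - al e)
     \<and> (\<forall>x y. (x, y) \<in> {(src e, tgt e) | e. True}\<^sup>*)"

definition kappa :: "('e::finite \<Rightarrow> 'v) \<Rightarrow> 'v \<Rightarrow> nat" where
  "kappa src x = card {e. src e = x}"

definition ip :: "int^'d::finite \<Rightarrow> real^'d \<Rightarrow> real" where
  "ip m k = (\<Sum>i\<in>UNIV. of_int (m $ i) * k $ i)"

definition realvec :: "int^'d::finite \<Rightarrow> real^'d" where
  "realvec m = (\<chi> i. of_int (m $ i))"

definition fiberH ::
  "('e::finite \<Rightarrow> 'v::finite) \<Rightarrow> ('e \<Rightarrow> 'v) \<Rightarrow> ('e \<Rightarrow> int^'d::finite) \<Rightarrow> ('e \<Rightarrow> real)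
   \<Rightarrow> ('v \<Rightarrow> real) \<Rightarrow> real^'d \<Rightarrow> complex^'v^'v" where
  "fiberH src tgt tau al V k = (\<chi> x y.
      (\<Sum>e\<in>{e. src e = x \<and> tgt e = y}. exp (\<i> * complex_of_real (al e + ip (tau e) k)))
      + (if x = y then complex_of_real (V x - real (kappa src x)) else 0))"

(* ---------- cycles ----------
   a cycle of length n: a list of n oriented edges, each ending where the next
   (cyclically) starts.  Lists are ordered, so cyclic shifts are distinct. *)

definition is_cycle :: "('a \<Rightarrow> 'v) \<Rightarrow> ('a \<Rightarrow> 'v) \<Rightarrow> 'a list \<Rightarrow> bool" where
  "is_cycle src tgt c \<longleftrightarrow> c \<noteq> [] \<and>
     (\<forall>i < length c. tgt (c ! i) = src (c ! ((i + 1) mod length c)))"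

definition cycles :: "('a \<Rightarrow> 'v) \<Rightarrow> ('a \<Rightarrow> 'v) \<Rightarrow> nat \<Rightarrow> 'a list set" where
  "cycles src tgt n = {c. length c = n \<and> is_cycle src tgt c}"

definition cyc_tau :: "('a \<Rightarrow> int^'d::finite) \<Rightarrow> 'a list \<Rightarrow> int^'d" where
  "cyc_tau tau c = sum_list (map tau c)"

definition cyc_al :: "('a \<Rightarrow> real) \<Rightarrow> 'a list \<Rightarrow> real" where
  "cyc_al al c = sum_list (map al c)"

(* modified graph: oriented edges 'e + 'v, Inr x is the added loop e_x at x *)
definition msrc :: "('e \<Rightarrow> 'v) \<Rightarrow> 'e + 'v \<Rightarrow> 'v" where
  "msrc src a = (case a of Inl e \<Rightarrow> src e | Inr x \<Rightarrow> x)"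

definition mtgt :: "('e \<Rightarrow> 'v) \<Rightarrow> 'e + 'v \<Rightarrow> 'v" where
  "mtgt tgt a = (case a of Inl e \<Rightarrow> tgt e | Inr x \<Rightarrow> x)"

definition mtau :: "('e \<Rightarrow> int^'d::finite) \<Rightarrow> 'e + 'v \<Rightarrow> int^'d" where
  "mtau tau a = (case a of Inl e \<Rightarrow> tau e | Inr x \<Rightarrow> 0)"

definition mal :: "('e \<Rightarrow> real) \<Rightarrow> 'e + 'v \<Rightarrow> real" where
  "mal al a = (case a of Inl e \<Rightarrow> al e | Inr x \<Rightarrow> 0)"

definition vpot :: "('e::finite \<Rightarrow> 'v) \<Rightarrow> ('v \<Rightarrow> real) \<Rightarrow> 'v \<Rightarrow> real" where
  "vpot src V x = V x - real (kappa src x)"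

definition omega :: "('e::finite \<Rightarrow> 'v) \<Rightarrow> ('v \<Rightarrow> real) \<Rightarrow> ('e + 'v) list \<Rightarrow> real" where
  "omega src V c = prod_list (map (\<lambda>a. case a of Inl e \<Rightarrow> 1 | Inr x \<Rightarrow> vpot src V x) c)"

(* ---------- integer cycle space of G_* ----------
   integer 1-chains are represented as antisymmetric functions f : A_* -> Z
   (f (rv e) = - f e); the cycle space is the kernel of the boundary map. *)

definition cycle_space :: "('e::finite \<Rightarrow> 'v) \<Rightarrow> ('e \<Rightarrow> 'e) \<Rightarrow> ('e \<Rightarrow> int) set" where
  "cycle_space src rv = {f. (\<forall>e. f (rv e) = - f e) \<and> (\<forall>x. (\<Sum>e\<in>{e. src e = x}. f e) = 0)}"

(* chain of a cycle of the modified graph (its G_*-part; the loops e_x are the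
   remaining basis vectors of the cycle space of the modified graph) *)
definition chain_of :: "('e \<Rightarrow> 'e) \<Rightarrow> ('e + 'v) list \<Rightarrow> 'e \<Rightarrow> int" where
  "chain_of rv c e = int (count_list c (Inl e)) - int (count_list c (Inl (rv e)))"

(* index and flux of a chain; each unoriented edge appears twice in the sum
   (once per orientation, with equal contributions), hence the factor 1/2 *)
definition ch_tau :: "('e::finite \<Rightarrow> int^'d::finite) \<Rightarrow> ('e \<Rightarrow> int) \<Rightarrow> int^'d" where
  "ch_tau tau f = (\<chi> i. (\<Sum>e\<in>UNIV. f e * tau e $ i) div 2)"

definition ch_al :: "('e::finite \<Rightarrow> real) \<Rightarrow> ('e \<Rightarrow> int) \<Rightarrow> real" where
  "ch_al al f = (\<Sum>e\<in>UNIV. of_int (f e) * al e) / 2"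

(* beta = #E_* - #V_* + 1 ; #E_* = (number of oriented edges)/2 *)
definition betti :: "'e::finite itself \<Rightarrow> 'v::finite itself \<Rightarrow> nat" where
  "betti TYPE('e) TYPE('v) = CARD('e) div 2 + 1 - CARD('v)"

(* the basis: blat i (i in 'd, i.e. c_1..c_d) and bzero j (j < beta - d, i.e. c_{d+1}..c_beta) *)
definition cycle_basis ::
  "('e::finite \<Rightarrow> 'v::finite) \<Rightarrow> ('e \<Rightarrow> 'e) \<Rightarrow> ('e \<Rightarrow> int^'d::finite) \<Rightarrow> nat
   \<Rightarrow> ('d \<Rightarrow> 'e \<Rightarrow> int) \<Rightarrow> (nat \<Rightarrow> 'e \<Rightarrow> int) \<Rightarrow> bool" where
  "cycle_basis src rv tau m blat bzero \<longleftrightarrow>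
     (\<forall>i. blat i \<in> cycle_space src rv \<and> ch_tau tau (blat i) = axis i 1)
     \<and> (\<forall>j<m. bzero j \<in> cycle_space src rv \<and> ch_tau tau (bzero j) = 0)
     \<and> (\<forall>f\<in>cycle_space src rv. \<exists>!ab :: ('d \<Rightarrow> int) \<times> (nat \<Rightarrow> int).
           (\<forall>j\<ge>m. snd ab j = 0) \<and>
           f = (\<lambda>e. (\<Sum>i\<in>UNIV. fst ab i * blat i e) + (\<Sum>j<m. snd ab j * bzero j e)))"

definition zero_coeffs ::
  "nat \<Rightarrow> ('d::finite \<Rightarrow> 'e \<Rightarrow> int) \<Rightarrow> (nat \<Rightarrow> 'e \<Rightarrow> int) \<Rightarrow> ('e \<Rightarrow> int) \<Rightarrow> nat \<Rightarrow> int" where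
  "zero_coeffs m blat bzero f = snd (THE ab :: ('d \<Rightarrow> int) \<times> (nat \<Rightarrow> int).
           (\<forall>j\<ge>m. snd ab j = 0) \<and>
           f = (\<lambda>e. (\<Sum>i\<in>UNIV. fst ab i * blat i e) + (\<Sum>j<m. snd ab j * bzero j e)))"

definition alP ::
  "('e \<Rightarrow> 'e) \<Rightarrow> ('e::finite \<Rightarrow> real) \<Rightarrow> nat \<Rightarrow> ('d::finite \<Rightarrow> 'e \<Rightarrow> int) \<Rightarrow> (nat \<Rightarrow> 'e \<Rightarrow> int)
   \<Rightarrow> ('e + 'v) list \<Rightarrow> real" where
  "alP rv al m blat bzero c =
     (\<Sum>j<m. of_int (zero_coeffs m blat bzero (chain_of rv c) j) * ch_al al (bzero j))"

definition k_o :: "('e::finite \<Rightarrow> real) \<Rightarrow> ('d::finite \<Rightarrow> 'e \<Rightarrow> int) \<Rightarrow> real^'d" where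
  "k_o al blat = (\<chi> i. - ch_al al (blat i))"

definition S_fun ::
  "('e \<Rightarrow> 'e) \<Rightarrow> ('e::finite \<Rightarrow> real) \<Rightarrow> ('e \<Rightarrow> int^'d::finite) \<Rightarrow> nat \<Rightarrow> ('d \<Rightarrow> 'e \<Rightarrow> int)
   \<Rightarrow> (nat \<Rightarrow> 'e \<Rightarrow> int) \<Rightarrow> ('e + 'v) list \<Rightarrow> real^'d \<Rightarrow> real" where
  "S_fun rv al tau m blat bzero c k =
     (let a = alP rv al m blat bzero c in 2 * sin (a / 2) * sin (a / 2 + ip (cyc_tau (mtau tau) c) k))"

definition t_coef ::
  "('e::finite \<Rightarrow> 'v::finite) \<Rightarrow> ('e \<Rightarrow> 'v) \<Rightarrow> ('e \<Rightarrow> 'e) \<Rightarrow> ('e \<Rightarrow> real) \<Rightarrow> ('e \<Rightarrow> int^'d::finite)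
   \<Rightarrow> ('v \<Rightarrow> real) \<Rightarrow> nat \<Rightarrow> ('d \<Rightarrow> 'e \<Rightarrow> int) \<Rightarrow> (nat \<Rightarrow> 'e \<Rightarrow> int) \<Rightarrow> nat \<Rightarrow> int^'d \<Rightarrow> complex" where
  "t_coef src tgt rv al tau V m blat bzero n mm =
     (\<Sum>c\<in>{c\<in>cycles (msrc src) (mtgt tgt) n. cyc_tau (mtau tau) c = mm}.
        complex_of_real (omega src V c) * (1 - exp (- \<i> * complex_of_real (alP rv al m blat bzero c))))"

definition tau_plus :: "('e::finite \<Rightarrow> int^'d::finite) \<Rightarrow> real" where
  "tau_plus tau = Max (range (\<lambda>e. norm (realvec (tau e))))"

definition torus :: "(real^'d::finite) set" where
  "torus = cbox 0 (\<chi> i. 2 * pi)"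

end

(*
  H_alpha(k) is the weighted adjacency matrix of the modified graph: an oriented edge e carries
  exp(i (alpha(e) + <tau(e), k>)) and the added loop e_x carries v_x.  Hence tr H_alpha(k)^n is the
  sum over the cycles c of length n of omega(c) exp(i (alpha(c) + <tau(c), k>)).

  Expanding the chain of a cycle c in the basis c_1, ..., c_beta and pairing with tau shows that the
  coefficients of c_1, ..., c_d form the index tau(c); pairing with alpha then gives
  alpha(c) + <tau(c), k_o> = alpha(P c).  Reversing a cycle preserves omega and negates index, flux
  and alpha(P c), so symmetrizing over reversal turns the trace difference into the sum of
  omega(c) S(c, k); grouping the cycles by index gives the Fourier expansion, and orthogonality of
  the characters exp(i <m, k>) on the torus keeps only the zero-index coefficient.  For n = 1, 2 the
  cycles of the modified graph are listed explicitly; each loop e_x in a cycle contributes the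
  factor v_x to its weight and nothing to its index and flux.
*)

theory Submission
  imports Defs
begin

lemma msrc_simps [simp]: "msrc src (Inl e) = src e" "msrc src (Inr x) = x"
  by (simp_all add: msrc_def)

lemma mtgt_simps [simp]: "mtgt tgt (Inl e) = tgt e" "mtgt tgt (Inr x) = x"
  by (simp_all add: mtgt_def)

lemma mtau_simps [simp]: "mtau tau (Inl e) = tau e" "mtau tau (Inr x) = 0"
  by (simp_all add: mtau_def)

lemma mal_simps [simp]: "mal al (Inl e) = al e" "mal al (Inr x) = 0"
  by (simp_all add: mal_def)

lemma cyc_tau_simps [simp]: "cyc_tau f [] = 0" "cyc_tau f (a # c) = f a + cyc_tau f c"
  by (simp_all add: cyc_tau_def)

lemma cyc_al_simps [simp]: "cyc_al f [] = 0" "cyc_al f (a # c) = f a + cyc_al f c"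
  by (simp_all add: cyc_al_def)

lemma omega_simps [simp]:
  "omega src V [] = 1" "omega src V (Inl e # c) = omega src V c"
  "omega src V (Inr x # c) = vpot src V x * omega src V c"
  by (simp_all add: omega_def)

lemma omega_map_Inl [simp]: "omega src V (map Inl c) = 1"
  by (induction c) simp_all

lemma cyc_tau_map_Inl [simp]: "cyc_tau (mtau tau) (map Inl c) = cyc_tau tau c"
  by (induction c) simp_all

lemma cyc_al_map_Inl [simp]: "cyc_al (mal al) (map Inl c) = cyc_al al c"
  by (induction c) simp_all

lemma cyc_al_zero [simp]: "cyc_al (mal (\<lambda>_. 0)) c = 0"
  by (induction c) (auto simp: cyc_al_def mal_def split: sum.split)

lemma ip_add_left: "ip (a + b) k = ip a k + ip b k"
  by (simp add: ip_def algebra_simps sum.distrib)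

lemma ip_add_right: "ip a (k + k') = ip a k + ip a k'"
  by (simp add: ip_def algebra_simps sum.distrib)

lemma ip_zero_left [simp]: "ip 0 k = 0"
  by (simp add: ip_def)

lemma ip_uminus_left: "ip (- a) k = - ip a k"
  by (simp add: ip_def sum_negf)

lemma ip_eq_inner: "ip m q = realvec m \<bullet> q"
  by (simp add: ip_def realvec_def inner_vec_def)

lemma realvec_zero [simp]: "realvec 0 = 0"
  by (simp add: realvec_def vec_eq_iff)

lemma realvec_add: "realvec (a + b) = realvec a + realvec b"
  by (simp add: realvec_def vec_eq_iff)

lemma vec_nth_sum_list: "sum_list xs $ i = sum_list (map (\<lambda>x. x $ i) xs)"
  by (induction xs) auto

lemma sum_UNIV_Plus:
  fixes h :: "'e::finite + 'v::finite \<Rightarrow> 'b::comm_monoid_add"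
  shows "(\<Sum>a\<in>UNIV. h a) = (\<Sum>e\<in>UNIV. h (Inl e)) + (\<Sum>x\<in>UNIV. h (Inr x))"
  by (subst UNIV_Plus_UNIV[symmetric], subst sum.Plus) (auto simp: o_def)

lemma mpow_1: "mpow A 1 = A"
  by (simp add: matrix_mul_rid)

section \<open>Closed walks and traces of weighted adjacency matrices\<close>

fun walk :: "('a \<Rightarrow> 'v) \<Rightarrow> ('a \<Rightarrow> 'v) \<Rightarrow> 'v \<Rightarrow> 'a list \<Rightarrow> 'v \<Rightarrow> bool" where
  "walk s t x [] y \<longleftrightarrow> x = y"
| "walk s t x (a # c) y \<longleftrightarrow> s a = x \<and> walk s t (t a) c y"

definition weighted_adjacency ::
  "('a::finite \<Rightarrow> 'v::finite) \<Rightarrow> ('a \<Rightarrow> 'v) \<Rightarrow> ('a \<Rightarrow> 'b::comm_semiring_1) \<Rightarrow> 'b^'v^'v" where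
  "weighted_adjacency s t w = (\<chi> x y. \<Sum>a\<in>{a. s a = x \<and> t a = y}. w a)"

lemma finite_lists_length_eq_Collect: "finite {c :: 'a::finite list. length c = n \<and> P c}"
  by (rule finite_subset[OF _ finite_lists_length_eq[of "UNIV :: 'a set" n]]) auto

lemma finite_cycles: "finite (cycles (s :: 'a::finite \<Rightarrow> 'v) t n)"
  unfolding cycles_def by (rule finite_lists_length_eq_Collect)

lemma walks_Suc_eq_image:
  "{c. length c = Suc n \<and> walk s t x c y} =
     (\<lambda>(a, c). a # c) ` (SIGMA a:{a. s a = x}. {c. length c = n \<and> walk s t (t a) c y})"
  by (auto simp: length_Suc_conv image_iff)

lemma mpow_weighted_adjacency:
  fixes s t :: "'a::finite \<Rightarrow> 'v::finite" and w :: "'a \<Rightarrow> 'b::comm_semiring_1"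
  shows "mpow (weighted_adjacency s t w) n $ x $ y
           = (\<Sum>c\<in>{c. length c = n \<and> walk s t x c y}. prod_list (map w c))"
proof (induction n arbitrary: x)
  case 0
  have "{c. length c = 0 \<and> walk s t x c y} = (if x = y then {[]} else {})" by auto
  then show ?case by (simp add: mat_def)
next
  case (Suc n)
  let ?W = "\<lambda>z. {c. length c = n \<and> walk s t z c y}"
  have "mpow (weighted_adjacency s t w) (Suc n) $ x $ y
          = (\<Sum>z\<in>UNIV. (\<Sum>a\<in>{a. s a = x \<and> t a = z}. w a) * (\<Sum>c\<in>?W z. prod_list (map w c)))"
    by (simp add: matrix_matrix_mult_def Suc) (simp add: weighted_adjacency_def)
  also have "\<dots> = (\<Sum>z\<in>UNIV. \<Sum>a\<in>{a. s a = x \<and> t a = z}. \<Sum>c\<in>?W (t a). w a * prod_list (map w c))"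
    unfolding sum_product by (intro sum.cong refl) simp
  also have "\<dots> = (\<Sum>a\<in>{a. s a = x}. \<Sum>c\<in>?W (t a). w a * prod_list (map w c))"
    using sum.group[of "{a. s a = x}" UNIV t "\<lambda>a. \<Sum>c\<in>?W (t a). w a * prod_list (map w c)"]
    by simp
  also have "\<dots> = (\<Sum>(a, c)\<in>(SIGMA a:{a. s a = x}. ?W (t a)). prod_list (map w (a # c)))"
    by (subst sum.Sigma) (auto intro: finite_lists_length_eq_Collect)
  also have "\<dots> = (\<Sum>c\<in>{c. length c = Suc n \<and> walk s t x c y}. prod_list (map w c))"
    unfolding walks_Suc_eq_image
    by (subst sum.reindex) (auto simp: inj_on_def intro!: sum.cong split: prod.splits)
  finally show ?case .
qed

lemma walk_iff_nth:
  assumes "c \<noteq> []"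
  shows "walk s t x c y \<longleftrightarrow> s (c ! 0) = x \<and> t (c ! (length c - 1)) = y
           \<and> (\<forall>i < length c - 1. t (c ! i) = s (c ! Suc i))"
  using assms
proof (induction c arbitrary: x)
  case (Cons a c)
  show ?case
  proof (cases "c = []")
    case False
    then obtain N where "length c = Suc N" by (cases c) auto
    then show ?thesis using Cons False by (auto simp: All_less_Suc2)
  qed simp
qed simp

lemma is_cycle_iff_closed_walk: "is_cycle s t c \<longleftrightarrow> c \<noteq> [] \<and> walk s t (s (hd c)) c (s (hd c))"
proof (cases "c = []")
  case False
  then obtain N where N: "length c = Suc N" by (cases c) auto
  have "(\<forall>i < length c. t (c ! i) = s (c ! ((i + 1) mod length c)))
          \<longleftrightarrow> t (c ! N) = s (c ! 0) \<and> (\<forall>i < N. t (c ! i) = s (c ! Suc i))"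
    unfolding N All_less_Suc by auto
  then show ?thesis using False N by (simp add: is_cycle_def walk_iff_nth hd_conv_nth)
qed (simp add: is_cycle_def)

lemma trace_mpow_weighted_adjacency:
  fixes s t :: "'a::finite \<Rightarrow> 'v::finite" and w :: "'a \<Rightarrow> 'b::comm_semiring_1"
  assumes "n \<ge> 1"
  shows "trace (mpow (weighted_adjacency s t w) n) = (\<Sum>c\<in>cycles s t n. prod_list (map w c))"
proof -
  have "trace (mpow (weighted_adjacency s t w) n)
          = (\<Sum>x\<in>UNIV. \<Sum>c\<in>{c\<in>cycles s t n. s (hd c) = x}. prod_list (map w c))"
    unfolding trace_def mpow_weighted_adjacency using assms
    by (intro sum.cong refl arg_cong[where f = "sum _"])
      (auto simp: cycles_def is_cycle_iff_closed_walk Suc_le_length_iff)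
  also have "\<dots> = (\<Sum>c\<in>cycles s t n. prod_list (map w c))"
    by (rule sum.group) (auto simp: finite_cycles)
  finally show ?thesis .
qed

lemma walk_snoc: "walk s t x (c @ [a]) z \<longleftrightarrow> walk s t x c (s a) \<and> t a = z"
  by (induction c arbitrary: x) auto

lemma walk_rev: "walk s t x c y \<Longrightarrow> walk t s y (rev c) x"
  by (induction c arbitrary: x) (auto simp: walk_snoc)

lemma walk_last: "walk s t x c y \<Longrightarrow> c \<noteq> [] \<Longrightarrow> t (last c) = y"
  by (simp add: walk_iff_nth last_conv_nth)

lemma is_cycle_rev: "is_cycle s t c \<Longrightarrow> is_cycle t s (rev c)"
  by (auto simp: is_cycle_iff_closed_walk hd_rev walk_last intro: walk_rev)

lemma is_cycle_map: "is_cycle s t (map r c) \<longleftrightarrow> is_cycle (s \<circ> r) (t \<circ> r) c"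
  by (auto simp: is_cycle_def)

lemma sum_list_map_tgt_eq_src:
  fixes h :: "'v \<Rightarrow> 'b::comm_monoid_add"
  assumes "is_cycle s t c"
  shows "sum_list (map (\<lambda>a. h (t a)) c) = sum_list (map (\<lambda>a. h (s a)) c)"
proof -
  have "map (\<lambda>a. h (t a)) c = rotate1 (map (\<lambda>a. h (s a)) c)"
    using assms by (intro nth_equalityI) (auto simp: nth_rotate1 is_cycle_def)
  then show ?thesis by (cases "map (\<lambda>a. h (s a)) c") (simp_all add: add.commute)
qed

section \<open>Cycles of length one and two\<close>

lemma cycles_1_eq: "cycles s t 1 = {[a] | a. t a = s a}"
  by (auto simp: cycles_def is_cycle_def length_Suc_conv)

lemma cycles_2_eq: "cycles s t 2 = {[a, b] | a b. t a = s b \<and> t b = s a}"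
  by (auto simp: cycles_def is_cycle_def length_Suc_conv numeral_2_eq_2 All_less_Suc less_Suc_eq)

lemma sum_cycles_1: "(\<Sum>c\<in>cycles s t 1. F c) = (\<Sum>a\<in>{a. t a = s a}. F [a])"
proof -
  have "cycles s t 1 = (\<lambda>a. [a]) ` {a. t a = s a}" unfolding cycles_1_eq by auto
  then show ?thesis by (simp add: sum.reindex inj_on_def)
qed

lemma sum_modified_cycles_1:
  fixes src tgt :: "'e::finite \<Rightarrow> 'v::finite"
  shows "(\<Sum>c\<in>cycles (msrc src) (mtgt tgt) 1. F c)
           = (\<Sum>c\<in>cycles src tgt 1. F (map Inl c)) + (\<Sum>x\<in>UNIV. F [Inr x])"
proof -
  have cycles_1: "cycles (msrc src) (mtgt tgt) 1 = map Inl ` cycles src tgt 1 \<union> range (\<lambda>x. [Inr x])"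
  proof (intro equalityI subsetI)
    fix c assume "c \<in> cycles (msrc src) (mtgt tgt) 1"
    then obtain a where c: "c = [a]" and a: "mtgt tgt a = msrc src a"
      unfolding cycles_1_eq by blast
    show "c \<in> map Inl ` cycles src tgt 1 \<union> range (\<lambda>x. [Inr x])"
    proof (cases a)
      case (Inl e)
      then have "c = map Inl [e]" "[e] \<in> cycles src tgt 1"
        using c a unfolding cycles_1_eq by auto
      then show ?thesis by (simp only:) (intro UnI1 imageI)
    qed (use c in auto)
  qed (unfold cycles_1_eq, auto)
  have "(\<Sum>c\<in>cycles (msrc src) (mtgt tgt) 1. F c)
          = sum F (map Inl ` cycles src tgt 1) + sum F (range (\<lambda>x. [Inr x]))"
    unfolding cycles_1 by (rule sum.union_disjoint) (auto simp: finite_cycles)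
  then show ?thesis by (simp add: sum.reindex inj_on_def)
qed

lemma sum_modified_cycles_2:
  fixes src tgt :: "'e::finite \<Rightarrow> 'v::finite"
  shows "(\<Sum>c\<in>cycles (msrc src) (mtgt tgt) 2. F c)
           = (\<Sum>c\<in>cycles src tgt 2. F (map Inl c))
             + (\<Sum>e\<in>{e. tgt e = src e}. F [Inl e, Inr (src e)] + F [Inr (src e), Inl e])
             + (\<Sum>x\<in>UNIV. F [Inr x, Inr x])"
proof -
  let ?L = "{e. tgt e = src e}"
  have cycles_2: "cycles (msrc src) (mtgt tgt) 2
          = map Inl ` cycles src tgt 2 \<union> (\<lambda>e. [Inl e, Inr (src e)]) ` ?L
            \<union> (\<lambda>e. [Inr (src e), Inl e]) ` ?L \<union> range (\<lambda>x. [Inr x, Inr x])"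
  proof (intro equalityI subsetI)
    fix c assume "c \<in> cycles (msrc src) (mtgt tgt) 2"
    then obtain a b where c: "c = [a, b]"
      and ab: "mtgt tgt a = msrc src b" "mtgt tgt b = msrc src a"
      unfolding cycles_2_eq by blast
    show "c \<in> map Inl ` cycles src tgt 2 \<union> (\<lambda>e. [Inl e, Inr (src e)]) ` ?L
                 \<union> (\<lambda>e. [Inr (src e), Inl e]) ` ?L \<union> range (\<lambda>x. [Inr x, Inr x])"
    proof (cases a; cases b)
      fix e e' assume "a = Inl e" "b = Inl e'"
      then have "c = map Inl [e, e']" "[e, e'] \<in> cycles src tgt 2"
        using c ab by (auto simp: cycles_2_eq)
      then show ?thesis by (simp only:) (intro UnI1 imageI)
    qed (use c ab in auto)
  qed (auto simp: cycles_2_eq)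
  have "(\<Sum>c\<in>cycles (msrc src) (mtgt tgt) 2. F c)
          = sum F (map Inl ` cycles src tgt 2) + sum F ((\<lambda>e. [Inl e, Inr (src e)]) ` ?L)
            + sum F ((\<lambda>e. [Inr (src e), Inl e]) ` ?L) + sum F (range (\<lambda>x. [Inr x, Inr x]))"
    unfolding cycles_2 by (subst sum.union_disjoint; auto simp: finite_cycles)+
  then show ?thesis by (simp add: sum.reindex inj_on_def sum.distrib add.assoc)
qed

section \<open>Characters on the torus\<close>

interpretation lborel_product: product_sigma_finite "\<lambda>_::'a. (lborel :: real measure)"
  by unfold_locales

lemma integral_lborel_prod_Basis:
  fixes f :: "'a::euclidean_space \<Rightarrow> real \<Rightarrow> complex"
  assumes "\<And>b. b \<in> Basis \<Longrightarrow> integrable lborel (f b)"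
  shows "(\<integral>x. (\<Prod>b\<in>Basis. f b (x \<bullet> b)) \<partial>(lborel :: 'a measure)) = (\<Prod>b\<in>Basis. \<integral>y. f b y \<partial>lborel)"
proof -
  have "(\<lambda>x::'a. \<Prod>b\<in>Basis. f b (x \<bullet> b)) \<in> borel_measurable borel"
    using assms by measurable
  moreover have "(\<lambda>g. \<Sum>b\<in>Basis. g b *\<^sub>R b) \<in> measurable (\<Pi>\<^sub>M b\<in>Basis. lborel) (borel :: 'a measure)"
    by measurable
  ultimately have "(\<integral>x. (\<Prod>b\<in>Basis. f b (x \<bullet> b)) \<partial>(lborel :: 'a measure))
      = (\<integral>g. (\<Prod>b\<in>Basis. f b ((\<Sum>b'\<in>Basis. g b' *\<^sub>R b') \<bullet> b)) \<partial>(\<Pi>\<^sub>M b\<in>Basis. lborel))"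
    by (subst lborel_eq) (rule integral_distr)
  also have "\<dots> = (\<integral>g. (\<Prod>b\<in>Basis. f b (g b)) \<partial>(\<Pi>\<^sub>M b\<in>Basis. lborel))"
    by (intro Bochner_Integration.integral_cong refl prod.cong)
      (simp add: inner_sum_left inner_Basis if_distrib sum.delta cong: if_cong)
  also have "\<dots> = (\<Prod>b\<in>Basis. \<integral>y. f b y \<partial>lborel)"
    by (rule lborel_product.product_integral_prod) (auto intro: assms)
  finally show ?thesis .
qed

lemma continuous_on_cis_ip: "continuous_on A (\<lambda>q. c * cis (ip m q))"
  unfolding ip_def cis_conv_exp by (intro continuous_intros)

lemma content_torus:
  "Henstock_Kurzweil_Integration.content (torus :: (real^'d::finite) set) = (2 * pi) ^ CARD('d)"
proof -
  have "(0 :: real^'d) \<in> torus" by (simp add: torus_def mem_box_cart)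
  then show ?thesis unfolding torus_def by (subst content_cbox_cart) auto
qed

lemma cis_sum: "cis (\<Sum>x\<in>A. f x) = (\<Prod>x\<in>A. cis (f x))"
  by (induction A rule: infinite_finite_induct) (simp_all flip: cis_mult)

lemma indicator_torus: "indicator torus q = (\<Prod>b\<in>Basis. indicator {0..2 * pi} (q \<bullet> b) :: real)"
proof -
  have "q \<in> torus \<longleftrightarrow> (\<forall>b\<in>Basis. q \<bullet> b \<in> {0..2 * pi})"
    by (auto simp: torus_def mem_box Basis_vec_def inner_axis)
  then show ?thesis
    by (auto simp: indicator_def prod_zero_iff intro!: prod.neutral)
qed

lemma integral_cis_int_period:
  assumes "j \<noteq> 0"
  shows "(\<integral>y. indicator {0..2 * pi} y *\<^sub>R cis (of_int j * y) \<partial>lborel) = 0"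
proof -
  have "set_integrable lborel {0..2 * pi} (\<lambda>y. cis (of_int j * y))"
    unfolding set_integrable_def cis_conv_exp
    by (auto intro!: borel_integrable_compact continuous_intros)
  then have "(\<integral>y. indicator {0..2 * pi} y *\<^sub>R cis (of_int j * y) \<partial>lborel)
               = integral {0..2 * pi} (\<lambda>y. exp ((\<i> * of_int j) * complex_of_real y))"
    by (simp add: set_borel_integral_eq_integral(2)[symmetric] set_lebesgue_integral_def
        cis_conv_exp mult_ac)
  also have "\<dots> = (exp ((\<i> * of_int j) * complex_of_real (2 * pi)) - 1) / (\<i> * of_int j)"
    using assms by (intro integral_exp) auto
  also have "exp ((\<i> * of_int j) * complex_of_real (2 * pi)) = 1"
    using exp_integer_2pi[of "of_int j"] by (simp add: mult_ac)
  finally show ?thesis by simp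
qed

lemma integral_torus_cis_ip:
  fixes m :: "int^'d::finite"
  shows "integral torus (\<lambda>q. cis (ip m q)) = (if m = 0 then (2 * pi) ^ CARD('d) else 0)"
proof (cases "m = 0")
  case True
  then show ?thesis
    unfolding torus_def by (simp add: ip_def content_torus[unfolded torus_def] scaleR_conv_of_real)
next
  case False
  then obtain i where i: "m $ i \<noteq> 0" by (auto simp: vec_eq_iff)
  define g where "g b y = indicator {0..2 * pi} y *\<^sub>R cis ((realvec m \<bullet> b) * y)" for b y
  have "set_integrable lborel torus (\<lambda>q. cis (ip m q))"
    unfolding set_integrable_def torus_def
    by (intro borel_integrable_compact continuous_on_cis_ip[of _ 1, simplified]) auto
  then have "integral torus (\<lambda>q. cis (ip m q)) = (\<integral>q. indicator torus q *\<^sub>R cis (ip m q) \<partial>lborel)"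
    by (simp add: set_borel_integral_eq_integral(2)[symmetric] set_lebesgue_integral_def)
  also have "(\<lambda>q. indicator torus q *\<^sub>R cis (ip m q)) = (\<lambda>q. \<Prod>b\<in>Basis. g b (q \<bullet> b))"
  proof
    fix q :: "real^'d"
    have "cis (ip m q) = (\<Prod>b\<in>Basis. cis ((realvec m \<bullet> b) * (q \<bullet> b)))"
      unfolding ip_eq_inner by (subst euclidean_inner) (rule cis_sum)
    then show "indicator torus q *\<^sub>R cis (ip m q) = (\<Prod>b\<in>Basis. g b (q \<bullet> b))"
      by (simp add: g_def indicator_torus scaleR_conv_of_real prod.distrib of_real_prod)
  qed
  also have "(\<integral>q. (\<Prod>b\<in>Basis. g b (q \<bullet> b)) \<partial>lborel) = (\<Prod>b\<in>Basis. \<integral>y. g b y \<partial>lborel)"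
    unfolding g_def cis_conv_exp
    by (rule integral_lborel_prod_Basis) (auto intro!: borel_integrable_compact continuous_intros)
  also have "\<dots> = 0"
  proof (rule prod_zero)
    show "\<exists>b\<in>Basis. (\<integral>y. g b y \<partial>lborel) = 0"
      using integral_cis_int_period[OF i]
      by (intro bexI[of _ "axis i 1"]) (auto simp: g_def inner_axis realvec_def Basis_vec_def)
  qed simp
  finally show ?thesis using False by simp
qed

lemma cis_symmetrized:
  "(1 - cis a) * cis x + (1 - cis (- a)) * cis (- x)
     = complex_of_real (4 * sin (a / 2) * sin (a / 2 + x))"
proof -
  have cis_add_cis_minus: "cis t + cis (- t) = complex_of_real (2 * cos t)" for t
    by (simp add: complex_eq_iff)
  have "(1 - cis a) * cis x + (1 - cis (- a)) * cis (- x)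
          = (cis x + cis (- x)) - (cis (a + x) + cis (- (a + x)))"
    by (simp add: algebra_simps cis_mult)
  also have "\<dots> = complex_of_real (2 * (cos x - cos (a + x)))"
    unfolding cis_add_cis_minus by (simp add: algebra_simps)
  also have "cos x - cos (a + x) = 2 * sin (a / 2) * sin (a / 2 + x)"
    by (simp add: cos_diff_cos field_simps)
  finally show ?thesis by simp
qed

lemma one_minus_cis_symmetrized:
  "(1 - cis a) + (1 - cis (- a)) = complex_of_real (4 * (sin (a / 2))\<^sup>2)"
  using cis_symmetrized[of a 0] by (simp add: power2_eq_square)

section \<open>Chains of cycles and reversed cycles\<close>

lemma even_sum_involution:
  fixes g :: "'a \<Rightarrow> int"
  assumes "finite X"
    and h: "\<And>x. x \<in> X \<Longrightarrow> h x \<in> X" "\<And>x. x \<in> X \<Longrightarrow> h (h x) = x" "\<And>x. x \<in> X \<Longrightarrow> h x \<noteq> x"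
    and g: "\<And>x. x \<in> X \<Longrightarrow> g (h x) = g x"
  shows "even (\<Sum>x\<in>X. g x)"
proof -
  define R where "R = {(x, y). x \<in> X \<and> y \<in> X \<and> (x = y \<or> h x = y)}"
  have R: "equiv X R"
    unfolding equiv_def R_def using h(2,3) by (auto simp: refl_on_def sym_def trans_def)
  have "(\<Sum>x\<in>X. g x) = (\<Sum>B\<in>X // R. \<Sum>x\<in>B. g x)"
    by (rule sum.partition[OF \<open>finite X\<close> partition_on_quotient[OF R]])
  also have "even \<dots>"
  proof (rule dvd_sum)
    fix B assume "B \<in> X // R"
    then obtain x where x: "x \<in> X" and "B = R `` {x}" using R by (metis quotientE)
    then have "B = {x, h x}" using h(1,2) by (auto simp: R_def)
    moreover have "x \<noteq> h x" "g (h x) = g x" using h(3)[OF x] g[OF x] by auto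
    ultimately show "even (\<Sum>x\<in>B. g x)" by simp
  qed
  finally show ?thesis .
qed

lemma sum_of_int_lincomb_mult:
  fixes w :: "'e \<Rightarrow> 'r::comm_ring_1"
  shows "(\<Sum>e\<in>E. of_int ((\<Sum>i\<in>I. A i * X i e) + (\<Sum>j\<in>J. B j * Y j e)) * w e)
           = (\<Sum>i\<in>I. of_int (A i) * (\<Sum>e\<in>E. of_int (X i e) * w e))
             + (\<Sum>j\<in>J. of_int (B j) * (\<Sum>e\<in>E. of_int (Y j e) * w e))"
  by (simp add: algebra_simps sum.distrib sum_distrib_left sum_distrib_right sum.swap[of _ E])

definition rev_arc :: "('e \<Rightarrow> 'e) \<Rightarrow> 'e + 'v \<Rightarrow> 'e + 'v" where
  "rev_arc rv a = (case a of Inl e \<Rightarrow> Inl (rv e) | Inr x \<Rightarrow> Inr x)"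

definition rev_cycle :: "('e \<Rightarrow> 'e) \<Rightarrow> ('e + 'v) list \<Rightarrow> ('e + 'v) list" where
  "rev_cycle rv c = rev (map (rev_arc rv) c)"

lemma rev_arc_simps [simp]: "rev_arc rv (Inl e) = Inl (rv e)" "rev_arc rv (Inr x) = Inr x"
  by (simp_all add: rev_arc_def)

lemma omega_rev_cycle [simp]: "omega src V (rev_cycle rv c) = omega src V c"
  by (induction c) (auto simp: rev_cycle_def omega_def split: sum.split)

locale quotient_graph =
  fixes src tgt :: "'e::finite \<Rightarrow> 'v::finite" and rv :: "'e \<Rightarrow> 'e"
    and tau :: "'e \<Rightarrow> int^'d::finite" and al :: "'e \<Rightarrow> real"
  assumes graph: "periodic_graph src tgt rv tau al"
begin

lemma rv_rv [simp]: "rv (rv e) = e"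
  and rv_neq: "rv e \<noteq> e"
  and src_rv [simp]: "src (rv e) = tgt e"
  and tgt_rv [simp]: "tgt (rv e) = src e"
  and tau_rv [simp]: "tau (rv e) = - tau e"
  and al_rv [simp]: "al (rv e) = - al e"
  using graph by (auto simp: periodic_graph_def)

lemma sum_chain_of:
  fixes g :: "'e \<Rightarrow> 'r::comm_ring_1"
  shows "(\<Sum>e\<in>UNIV. of_int (chain_of rv c e) * g e)
           = sum_list (map (\<lambda>a. case a of Inl e \<Rightarrow> g e - g (rv e) | Inr _ \<Rightarrow> 0) c)"
proof (induction c)
  case Nil
  then show ?case by (simp add: chain_of_def)
next
  case (Cons a c)
  have "chain_of rv (a # c) = (\<lambda>e. chain_of rv [a] e + chain_of rv c e)"
    by (auto simp: chain_of_def fun_eq_iff)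
  moreover have "(\<Sum>e\<in>UNIV. of_int (chain_of rv [a] e) * g e)
                   = (case a of Inl e \<Rightarrow> g e - g (rv e) | Inr _ \<Rightarrow> 0)"
  proof (cases a)
    case (Inl e0)
    have "chain_of rv [a] e = of_bool (e = e0) - of_bool (e = rv e0)" for e
      using Inl by (auto simp: chain_of_def)
    then show ?thesis using Inl by (simp add: left_diff_distrib sum_subtractf)
  qed (simp add: chain_of_def)
  ultimately show ?case using Cons by (simp add: distrib_right sum.distrib)
qed

lemma sum_chain_of_antisym:
  fixes g :: "'e \<Rightarrow> 'r::comm_ring_1"
  assumes "\<And>e. g (rv e) = - g e"
  shows "(\<Sum>e\<in>UNIV. of_int (chain_of rv c e) * g e)
           = 2 * sum_list (map (\<lambda>a. case a of Inl e \<Rightarrow> g e | Inr _ \<Rightarrow> 0) c)"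
  unfolding sum_chain_of assms by (induction c) (auto simp: algebra_simps split: sum.split)

lemma sum_chain_of_tau: "(\<Sum>e\<in>UNIV. chain_of rv c e * tau e $ l) = 2 * cyc_tau (mtau tau) c $ l"
proof -
  have "cyc_tau (mtau tau) c $ l = sum_list (map (\<lambda>a. case a of Inl e \<Rightarrow> tau e $ l | Inr _ \<Rightarrow> 0) c)"
    unfolding cyc_tau_def vec_nth_sum_list map_map
    by (intro arg_cong[where f = sum_list] map_cong) (auto split: sum.split)
  then show ?thesis using sum_chain_of_antisym[of "\<lambda>e. tau e $ l" c] by simp
qed

lemma ch_al_chain_of: "ch_al al (chain_of rv c) = cyc_al (mal al) c"
  using sum_chain_of_antisym[of al c] unfolding ch_al_def cyc_al_def mal_def[abs_def] by simp

lemma chain_of_in_cycle_space: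
  assumes "is_cycle (msrc src) (mtgt tgt) c"
  shows "chain_of rv c \<in> cycle_space src rv"
proof -
  have "(\<Sum>e\<in>{e. src e = x}. chain_of rv c e) = 0" for x
  proof -
    let ?h = "\<lambda>y. of_bool (y = x) :: int"
    have "(\<Sum>e\<in>{e. src e = x}. chain_of rv c e) = (\<Sum>e\<in>UNIV. of_int (chain_of rv c e) * ?h (src e))"
      by (simp add: sum.If_cases)
    also have "\<dots> = sum_list (map (\<lambda>a. ?h (msrc src a)) c) - sum_list (map (\<lambda>a. ?h (mtgt tgt a)) c)"
      unfolding sum_chain_of sum_list_subtractf[symmetric]
      by (intro arg_cong[where f = sum_list] map_cong) (auto split: sum.split)
    also have "\<dots> = 0" by (simp add: sum_list_map_tgt_eq_src[OF assms, where h = ?h])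
    finally show ?thesis .
  qed
  then show ?thesis by (auto simp: cycle_space_def chain_of_def)
qed

(* ch_tau halves the edge sum with div; the sum is even because its summand is invariant under
   the fixed-point-free edge reversal. *)
lemma sum_cycle_space_tau:
  assumes "f \<in> cycle_space src rv"
  shows "(\<Sum>e\<in>UNIV. f e * tau e $ l) = 2 * ch_tau tau f $ l"
proof -
  have "even (\<Sum>e\<in>UNIV. f e * tau e $ l)"
    using assms by (intro even_sum_involution[where h = rv]) (auto simp: rv_neq cycle_space_def)
  then show ?thesis by (simp add: ch_tau_def)
qed

lemma rev_arc_rev_arc [simp]: "rev_arc rv (rev_arc rv a) = a"
  and msrc_rev_arc [simp]: "msrc src (rev_arc rv a) = mtgt tgt a"
  and mtgt_rev_arc [simp]: "mtgt tgt (rev_arc rv a) = msrc src a"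
  and mtau_rev_arc [simp]: "mtau tau (rev_arc rv a) = - mtau tau a"
  and mal_rev_arc [simp]: "mal al (rev_arc rv a) = - mal al a"
  by (cases a; simp)+

lemma rev_cycle_rev_cycle [simp]: "rev_cycle rv (rev_cycle rv c) = (c :: ('e + 'v) list)"
  by (simp add: rev_cycle_def rev_map o_def)

lemma rev_cycle_in_cycles:
  assumes "c \<in> cycles (msrc src) (mtgt tgt) n"
  shows "rev_cycle rv c \<in> cycles (msrc src) (mtgt tgt) n"
proof -
  have "(msrc src \<circ> rev_arc rv) = mtgt tgt" "(mtgt tgt \<circ> rev_arc rv) = msrc src" by auto
  then show ?thesis
    using assms is_cycle_rev[of "mtgt tgt" "msrc src" "map (rev_arc rv) c"]
    by (simp add: cycles_def rev_cycle_def is_cycle_map)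
qed

lemma cyc_tau_rev_cycle [simp]:
  "cyc_tau (mtau tau) (rev_cycle rv c) = - cyc_tau (mtau tau) (c :: ('e + 'v) list)"
  by (induction c) (simp_all add: rev_cycle_def cyc_tau_def)

lemma cyc_al_rev_cycle [simp]:
  "cyc_al (mal al) (rev_cycle rv c) = - cyc_al (mal al) (c :: ('e + 'v) list)"
  by (induction c) (simp_all add: rev_cycle_def cyc_al_def)

lemma sum_rev_cycle:
  fixes S :: "('e + 'v) list set"
  assumes "\<And>c. c \<in> S \<Longrightarrow> rev_cycle rv c \<in> S"
  shows "(\<Sum>c\<in>S. F (rev_cycle rv c)) = (\<Sum>c\<in>S. F c)"
  by (rule sum.reindex_bij_witness[of _ "rev_cycle rv" "rev_cycle rv"]) (auto intro: assms)

lemma sum_symmetrize_rev_cycle: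
  fixes S :: "('e + 'v) list set" and F :: "('e + 'v) list \<Rightarrow> 'a::comm_semiring_1"
  assumes "\<And>c. c \<in> S \<Longrightarrow> rev_cycle rv c \<in> S"
  shows "2 * (\<Sum>c\<in>S. F c) = (\<Sum>c\<in>S. F c + F (rev_cycle rv c))"
  by (simp add: mult_2 sum.distrib sum_rev_cycle[OF assms])

end

section \<open>The projected flux\<close>

lemma S_fun_Cons_Inr [simp]:
  "S_fun rv al tau m blat bzero (Inr x # c) k = S_fun rv al tau m blat bzero c k"
proof -
  have "chain_of rv (Inr x # c) = chain_of rv c" by (simp add: chain_of_def fun_eq_iff)
  then show ?thesis by (simp add: S_fun_def alP_def)
qed

lemma S_fun_pair_Inr [simp]:
  "S_fun rv al tau m blat bzero [a, Inr x] k = S_fun rv al tau m blat bzero [a] k"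
proof -
  have "chain_of rv [a, Inr x] = chain_of rv [a]" by (simp add: chain_of_def fun_eq_iff)
  then show ?thesis by (simp add: S_fun_def alP_def)
qed

locale quotient_graph_with_basis = quotient_graph src tgt rv tau al
    for src tgt :: "'e::finite \<Rightarrow> 'v::finite" and rv tau and al :: "'e \<Rightarrow> real" +
  fixes m :: nat and blat :: "'d::finite \<Rightarrow> 'e::finite \<Rightarrow> int" and bzero :: "nat \<Rightarrow> 'e \<Rightarrow> int"
  assumes basis: "cycle_basis src rv tau m blat bzero"
begin

lemma cycle_space_expansion:
  assumes "f \<in> cycle_space src rv"
  obtains A
  where "f = (\<lambda>e. (\<Sum>i\<in>UNIV. A i * blat i e) + (\<Sum>j<m. zero_coeffs m blat bzero f j * bzero j e))"
proof -
  let ?P = "\<lambda>ab :: ('d \<Rightarrow> int) \<times> (nat \<Rightarrow> int). (\<forall>j\<ge>m. snd ab j = 0) \<and>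
              f = (\<lambda>e. (\<Sum>i\<in>UNIV. fst ab i * blat i e) + (\<Sum>j<m. snd ab j * bzero j e))"
  have "\<exists>!ab. ?P ab"
    using bspec[OF conjunct2[OF conjunct2[OF basis[unfolded cycle_basis_def]]] assms] .
  then have "?P (THE ab. ?P ab)" by (rule theI')
  then show thesis using that unfolding zero_coeffs_def by blast
qed

lemma cycle_basis_lattice: "blat i \<in> cycle_space src rv" "ch_tau tau (blat i) = axis i 1"
  using conjunct1[OF basis[unfolded cycle_basis_def]] by simp_all

lemma cycle_basis_zero_index:
  assumes "j < m"
  shows "bzero j \<in> cycle_space src rv" "ch_tau tau (bzero j) = 0"
  using assms conjunct1[OF conjunct2[OF basis[unfolded cycle_basis_def]]] by simp_all

lemma alP_eq_cyc_al_add_ip: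
  assumes "is_cycle (msrc src) (mtgt tgt) c"
  shows "alP rv al m blat bzero c = cyc_al (mal al) c + ip (cyc_tau (mtau tau) c) (k_o al blat)"
proof -
  define B where "B = zero_coeffs m blat bzero (chain_of rv c)"
  obtain A where A: "chain_of rv c = (\<lambda>e. (\<Sum>i\<in>UNIV. A i * blat i e) + (\<Sum>j<m. B j * bzero j e))"
    using cycle_space_expansion[OF chain_of_in_cycle_space[OF assms]] unfolding B_def .
  have A_eq: "A l = cyc_tau (mtau tau) c $ l" for l
  proof -
    have "2 * cyc_tau (mtau tau) c $ l = (\<Sum>e\<in>UNIV. chain_of rv c e * tau e $ l)"
      by (rule sum_chain_of_tau[symmetric])
    also have "\<dots> = (\<Sum>i\<in>UNIV. A i * (\<Sum>e\<in>UNIV. blat i e * tau e $ l))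
                    + (\<Sum>j<m. B j * (\<Sum>e\<in>UNIV. bzero j e * tau e $ l))"
      unfolding A by (rule sum_of_int_lincomb_mult[where 'r = int, unfolded of_int_eq_id id_apply])
    also have "\<dots> = (\<Sum>i\<in>UNIV. A i * (2 * axis i 1 $ l))"
      by (simp add: sum_cycle_space_tau cycle_basis_lattice cycle_basis_zero_index)
    also have "\<dots> = 2 * A l"
    proof -
      have "A i * (2 * axis i 1 $ l) = (if i = l then 2 * A l else 0)" for i by (simp add: axis_def)
      then show ?thesis by simp
    qed
    finally show ?thesis by simp
  qed
  have lat: "(\<Sum>i\<in>UNIV. of_int (A i) * (2 * ch_al al (blat i)))
               = - 2 * ip (cyc_tau (mtau tau) c) (k_o al blat)"
    unfolding ip_def k_o_def by (simp add: A_eq sum_distrib_left sum_negf mult_ac)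
  have zero: "(\<Sum>j<m. of_int (B j) * (2 * ch_al al (bzero j))) = 2 * alP rv al m blat bzero c"
    unfolding alP_def B_def by (simp add: sum_distrib_left mult_ac)
  have "2 * cyc_al (mal al) c = (\<Sum>e\<in>UNIV. of_int (chain_of rv c e) * al e)"
    using ch_al_chain_of[of c] by (simp add: ch_al_def)
  also have "\<dots> = (\<Sum>i\<in>UNIV. of_int (A i) * (2 * ch_al al (blat i)))
                  + (\<Sum>j<m. of_int (B j) * (2 * ch_al al (bzero j)))"
    unfolding A sum_of_int_lincomb_mult by (simp add: ch_al_def)
  finally show ?thesis using lat zero by linarith
qed

lemma alP_rev_cycle:
  assumes "c \<in> cycles (msrc src) (mtgt tgt) n"
  shows "alP rv al m blat bzero (rev_cycle rv c) = - alP rv al m blat bzero c"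
  using alP_eq_cyc_al_add_ip[of c] alP_eq_cyc_al_add_ip[of "rev_cycle rv c"]
    rev_cycle_in_cycles[OF assms] assms
  by (simp add: cycles_def ip_uminus_left)

lemma S_fun_Nil [simp]: "S_fun rv al tau m blat bzero ([] :: ('e + 'v) list) k = 0"
proof -
  \<comment> \<open>The empty list is no cycle, but its chain is that of the loop cycle [Inr x].\<close>
  have "chain_of rv ([] :: ('e + 'v) list) = chain_of rv [Inr (undefined :: 'v)]"
    by (simp add: chain_of_def fun_eq_iff)
  then have "alP rv al m blat bzero ([] :: ('e + 'v) list)
               = alP rv al m blat bzero [Inr (undefined :: 'v)]"
    unfolding alP_def by simp
  also have "alP rv al m blat bzero [Inr (undefined :: 'v)] = 0"
    using alP_eq_cyc_al_add_ip[of "[Inr undefined]"] by (simp add: is_cycle_def)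
  finally show ?thesis by (simp add: S_fun_def)
qed

end

section \<open>Traces of powers of the fiber operator\<close>

definition fiber_weight ::
  "('e::finite \<Rightarrow> 'v) \<Rightarrow> ('e \<Rightarrow> int^'d::finite) \<Rightarrow> ('e \<Rightarrow> real) \<Rightarrow> ('v \<Rightarrow> real) \<Rightarrow> real^'d
     \<Rightarrow> 'e + 'v \<Rightarrow> complex" where
  "fiber_weight src tau al V k a =
     (case a of Inl e \<Rightarrow> cis (al e + ip (tau e) k) | Inr x \<Rightarrow> complex_of_real (vpot src V x))"

lemma fiber_weight_simps [simp]:
  "fiber_weight src tau al V k (Inl e) = cis (al e + ip (tau e) k)"
  "fiber_weight src tau al V k (Inr x) = complex_of_real (vpot src V x)"
  by (simp_all add: fiber_weight_def)

lemma fiberH_eq_weighted_adjacency: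
  "fiberH src tgt tau al V k
     = weighted_adjacency (msrc src) (mtgt tgt) (fiber_weight src tau al V k)"
proof -
  have "(\<Sum>a\<in>{a. msrc src a = x \<and> mtgt tgt a = y}. fiber_weight src tau al V k a)
          = (\<Sum>e\<in>{e. src e = x \<and> tgt e = y}. cis (al e + ip (tau e) k))
            + (if x = y then complex_of_real (vpot src V x) else 0)" for x y
  proof -
    have "(\<Sum>a\<in>{a. msrc src a = x \<and> mtgt tgt a = y}. fiber_weight src tau al V k a)
            = (\<Sum>a\<in>UNIV. if msrc src a = x \<and> mtgt tgt a = y
                            then fiber_weight src tau al V k a else 0)"
      by (simp add: sum.If_cases)
    also have "\<dots> = (\<Sum>e\<in>UNIV. if src e = x \<and> tgt e = y then cis (al e + ip (tau e) k) else 0)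
                      + (\<Sum>z\<in>UNIV. if z = x \<and> z = y then complex_of_real (vpot src V z) else 0)"
      by (simp add: sum_UNIV_Plus cong: if_cong)
    also have "\<dots> = (\<Sum>e\<in>{e. src e = x \<and> tgt e = y}. cis (al e + ip (tau e) k))
                      + (if x = y then complex_of_real (vpot src V x) else 0)"
      by (cases "x = y") (auto simp: sum.If_cases intro!: sum.neutral)
    finally show ?thesis .
  qed
  then show ?thesis
    by (simp add: fiberH_def weighted_adjacency_def vec_eq_iff vpot_def cis_conv_exp)
qed

lemma prod_list_fiber_weight:
  "prod_list (map (fiber_weight src tau al V k) c)
     = complex_of_real (omega src V c) * cis (cyc_al (mal al) c + ip (cyc_tau (mtau tau) c) k)"
proof (induction c)
  case (Cons a c)
  then show ?case by (cases a) (simp_all add: ip_add_left algebra_simps flip: cis_mult)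
qed simp

lemma trace_mpow_fiberH:
  assumes "n \<ge> 1"
  shows "trace (mpow (fiberH src tgt tau al V k) n)
           = (\<Sum>c\<in>cycles (msrc src) (mtgt tgt) n. complex_of_real (omega src V c)
                * cis (cyc_al (mal al) c + ip (cyc_tau (mtau tau) c) k))"
  using assms
  by (simp add: fiberH_eq_weighted_adjacency trace_mpow_weighted_adjacency prod_list_fiber_weight)

lemma trace_fiberH_diff:
  assumes "n \<ge> 1"
  shows "trace (mpow (fiberH src tgt tau (\<lambda>_. 0) V k) n - mpow (fiberH src tgt tau al V k') n)
           = (\<Sum>c\<in>cycles (msrc src) (mtgt tgt) n. complex_of_real (omega src V c)
                * (cis (ip (cyc_tau (mtau tau) c) k)
                   - cis (cyc_al (mal al) c + ip (cyc_tau (mtau tau) c) k')))"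
  unfolding trace_sub trace_mpow_fiberH[OF assms] by (simp add: sum_subtractf right_diff_distrib)

lemma finite_int_vec_norm_le: "finite {mm :: int^'d::finite. norm (realvec mm) \<le> B}"
proof -
  have "{mm :: int^'d. norm (realvec mm) \<le> B} \<subseteq> vec_lambda ` (UNIV \<rightarrow>\<^sub>E {-\<lfloor>B\<rfloor>..\<lfloor>B\<rfloor>})"
  proof
    fix mm :: "int^'d" assume "mm \<in> {mm. norm (realvec mm) \<le> B}"
    then have "\<bar>real_of_int (mm $ i)\<bar> \<le> B" for i
      using component_le_norm_cart[of "realvec mm" i] by (simp add: realvec_def)
    then have bound: "\<bar>mm $ i\<bar> \<le> \<lfloor>B\<rfloor>" for i by (simp add: le_floor_iff)
    have "mm $ i \<in> {-\<lfloor>B\<rfloor>..\<lfloor>B\<rfloor>}" for i using bound[of i] by (simp add: abs_le_iff)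
    then have "vec_nth mm \<in> UNIV \<rightarrow>\<^sub>E {-\<lfloor>B\<rfloor>..\<lfloor>B\<rfloor>}" by (simp add: PiE_iff)
    then show "mm \<in> vec_lambda ` (UNIV \<rightarrow>\<^sub>E {-\<lfloor>B\<rfloor>..\<lfloor>B\<rfloor>})"
      by (metis image_eqI vec_nth_inverse)
  qed
  then show ?thesis by (rule finite_subset) (intro finite_imageI finite_PiE, auto)
qed

lemma norm_realvec_tau_le_tau_plus: "norm (realvec (tau e)) \<le> tau_plus tau"
  unfolding tau_plus_def by (rule Max_ge) auto

lemma norm_realvec_cyc_tau_le:
  "norm (realvec (cyc_tau (mtau tau) c)) \<le> real (length c) * tau_plus tau"
proof (induction c)
  case (Cons a c)
  have "0 \<le> tau_plus tau"
    by (rule order.trans[OF norm_ge_zero norm_realvec_tau_le_tau_plus])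
  then have "norm (realvec (mtau tau a)) \<le> tau_plus tau"
    by (cases a) (simp_all add: norm_realvec_tau_le_tau_plus)
  moreover have "realvec (cyc_tau (mtau tau) (a # c))
                   = realvec (mtau tau a) + realvec (cyc_tau (mtau tau) c)"
    by (simp add: realvec_add)
  ultimately show ?case
    using Cons norm_triangle_ineq[of "realvec (mtau tau a)" "realvec (cyc_tau (mtau tau) c)"]
    by (simp add: algebra_simps)
qed simp

lemma integral_trace_fiberH_diff:
  fixes tau :: "'e::finite \<Rightarrow> int^'d::finite" and src :: "'e \<Rightarrow> 'v::finite"
  assumes "n \<ge> 1"
  shows "(1 / (2 * pi) ^ CARD('d)) *\<^sub>R
           integral torus (\<lambda>q. trace (mpow (fiberH src tgt tau (\<lambda>_. 0) V q) n
                                        - mpow (fiberH src tgt tau al V q) n))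
         = (\<Sum>c\<in>{c\<in>cycles (msrc src) (mtgt tgt) n. cyc_tau (mtau tau) c = 0}.
              complex_of_real (omega src V c) * (1 - cis (cyc_al (mal al) c)))"
    (is "_ = (\<Sum>c\<in>?S0. ?K c)")
proof -
  let ?Ct = "cycles (msrc src) (mtgt tgt) n"
  have "integral torus (\<lambda>q. trace (mpow (fiberH src tgt tau (\<lambda>_. 0) V q) n
                                    - mpow (fiberH src tgt tau al V q) n))
          = integral torus (\<lambda>q. \<Sum>c\<in>?Ct. ?K c * cis (ip (cyc_tau (mtau tau) c) q))"
    unfolding trace_fiberH_diff[OF assms]
    by (intro arg_cong[where f = "integral _"] ext sum.cong refl) (simp add: algebra_simps cis_mult)
  also have "\<dots> = (\<Sum>c\<in>?Ct. ?K c * integral torus (\<lambda>q. cis (ip (cyc_tau (mtau tau) c) q)))"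
    unfolding torus_def
    by (subst integral_sum)
      (auto simp: finite_cycles intro!: integrable_continuous continuous_on_cis_ip)
  also have "\<dots> = (\<Sum>c\<in>?Ct. if cyc_tau (mtau tau) c = 0
                       then ?K c * complex_of_real ((2 * pi) ^ CARD('d)) else 0)"
    by (intro sum.cong refl) (simp add: integral_torus_cis_ip)
  also have "\<dots> = (\<Sum>c\<in>?S0. ?K c * complex_of_real ((2 * pi) ^ CARD('d)))"
    by (simp only: sum.inter_filter[OF finite_cycles])
  also have "\<dots> = (\<Sum>c\<in>?S0. ?K c) * complex_of_real ((2 * pi) ^ CARD('d))"
    by (simp only: sum_distrib_right)
  finally show ?thesis by (simp add: scaleR_conv_of_real)
qed

lemma sum_zero_index_modified_cycles_1:
  fixes src tgt :: "'e::finite \<Rightarrow> 'v::finite"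
  shows "(\<Sum>c\<in>{c\<in>cycles (msrc src) (mtgt tgt) 1. cyc_tau (mtau tau) c = 0}.
            omega src V c * (sin (cyc_al (mal al) c / 2))\<^sup>2)
         = (\<Sum>c\<in>{c\<in>cycles src tgt 1. cyc_tau tau c = 0}. (sin (cyc_al al c / 2))\<^sup>2)"
  unfolding sum.inter_filter[OF finite_cycles] sum_modified_cycles_1
  by (simp cong: if_cong)

lemma sum_zero_index_modified_cycles_2:
  fixes src tgt :: "'e::finite \<Rightarrow> 'v::finite"
  shows "(\<Sum>c\<in>{c\<in>cycles (msrc src) (mtgt tgt) 2. cyc_tau (mtau tau) c = 0}.
            omega src V c * (sin (cyc_al (mal al) c / 2))\<^sup>2)
         = 2 * (\<Sum>c\<in>{c\<in>cycles src tgt 1. cyc_tau tau c = 0}.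
                  vpot src V (src (hd c)) * (sin (cyc_al al c / 2))\<^sup>2)
           + (\<Sum>c\<in>{c\<in>cycles src tgt 2. cyc_tau tau c = 0}. (sin (cyc_al al c / 2))\<^sup>2)"
  unfolding sum.inter_filter[OF finite_cycles] sum_modified_cycles_2 sum_cycles_1
  by (simp add: sum_distrib_left cong: if_cong)

context quotient_graph_with_basis
begin

lemma trace_fiberH_diff_shifted:
  assumes "n \<ge> 1"
  shows "trace (mpow (fiberH src tgt tau (\<lambda>_. 0) V k) n
                - mpow (fiberH src tgt tau al V (k + k_o al blat)) n)
           = (\<Sum>c\<in>cycles (msrc src) (mtgt tgt) n. complex_of_real (omega src V c)
                * ((1 - cis (alP rv al m blat bzero c)) * cis (ip (cyc_tau (mtau tau) c) k)))"
  unfolding trace_fiberH_diff[OF assms]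
  by (intro sum.cong refl)
    (simp add: alP_eq_cyc_al_add_ip cycles_def ip_add_right algebra_simps cis_mult)

lemma trace_fiberH_diff_shifted_eq_sum_S:
  assumes "n \<ge> 1"
  shows "trace (mpow (fiberH src tgt tau (\<lambda>_. 0) V k) n
                - mpow (fiberH src tgt tau al V (k + k_o al blat)) n)
           = (\<Sum>c\<in>cycles (msrc src) (mtgt tgt) n.
                complex_of_real (omega src V c * S_fun rv al tau m blat bzero c k))"
proof -
  let ?Ct = "cycles (msrc src) (mtgt tgt) n"
  define G where "G c = complex_of_real (omega src V c)
                        * ((1 - cis (alP rv al m blat bzero c)) * cis (ip (cyc_tau (mtau tau) c) k))"
    for c
  have pair: "G c + G (rev_cycle rv c)
                = 2 * complex_of_real (omega src V c * S_fun rv al tau m blat bzero c k)"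
    if "c \<in> ?Ct" for c
    using cis_symmetrized[of "alP rv al m blat bzero c" "ip (cyc_tau (mtau tau) c) k"]
    by (simp add: G_def alP_rev_cycle[OF that] ip_uminus_left S_fun_def Let_def
        flip: distrib_left)
  have "2 * (\<Sum>c\<in>?Ct. G c) = (\<Sum>c\<in>?Ct. G c + G (rev_cycle rv c))"
    by (rule sum_symmetrize_rev_cycle) (rule rev_cycle_in_cycles)
  also have "\<dots> = 2 * (\<Sum>c\<in>?Ct. complex_of_real (omega src V c * S_fun rv al tau m blat bzero c k))"
    by (simp add: pair sum_distrib_left)
  finally show ?thesis by (simp add: trace_fiberH_diff_shifted[OF assms] G_def)
qed

lemma trace_fiberH_diff_shifted_eq_fourier_sum:
  assumes "n \<ge> 1"
  shows "trace (mpow (fiberH src tgt tau (\<lambda>_. 0) V k) n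
                - mpow (fiberH src tgt tau al V (k + k_o al blat)) n)
           = (\<Sum>mm\<in>{mm :: int^'d. norm (realvec mm) \<le> real n * tau_plus tau}.
                t_coef src tgt rv al tau V m blat bzero n mm
                * exp (- \<i> * complex_of_real (ip mm k)))"
proof -
  let ?Ct = "cycles (msrc src) (mtgt tgt) n"
  let ?M = "{mm :: int^'d. norm (realvec mm) \<le> real n * tau_plus tau}"
  define H where "H c = complex_of_real (omega src V c)
                          * (1 - exp (- \<i> * complex_of_real (alP rv al m blat bzero c)))
                          * exp (- \<i> * complex_of_real (ip (cyc_tau (mtau tau) c) k))"
    for c
  have "trace (mpow (fiberH src tgt tau (\<lambda>_. 0) V k) n
               - mpow (fiberH src tgt tau al V (k + k_o al blat)) n)
          = (\<Sum>c\<in>?Ct. complex_of_real (omega src V (rev_cycle rv c))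
               * ((1 - cis (alP rv al m blat bzero (rev_cycle rv c)))
                  * cis (ip (cyc_tau (mtau tau) (rev_cycle rv c)) k)))"
    unfolding trace_fiberH_diff_shifted[OF assms]
    by (rule sum_rev_cycle[symmetric]) (rule rev_cycle_in_cycles)
  also have "\<dots> = (\<Sum>c\<in>?Ct. H c)"
    by (intro sum.cong refl) (simp add: H_def alP_rev_cycle ip_uminus_left cis_conv_exp mult.assoc)
  also have "\<dots> = (\<Sum>mm\<in>?M. \<Sum>c\<in>{c\<in>?Ct. cyc_tau (mtau tau) c = mm}. H c)"
    using norm_realvec_cyc_tau_le[of tau]
    by (intro sum.group[symmetric] finite_cycles finite_int_vec_norm_le) (auto simp: cycles_def)
  also have "\<dots> = (\<Sum>mm\<in>?M. t_coef src tgt rv al tau V m blat bzero n mm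
                                  * exp (- \<i> * complex_of_real (ip mm k)))"
    by (intro sum.cong refl) (simp add: t_coef_def H_def sum_distrib_right)
  finally show ?thesis .
qed

lemma t_coef_zero_eq_sum:
  "t_coef src tgt rv al tau V m blat bzero n 0
     = (\<Sum>c\<in>{c\<in>cycles (msrc src) (mtgt tgt) n. cyc_tau (mtau tau) c = 0}.
          complex_of_real (omega src V c) * (1 - cis (- cyc_al (mal al) c)))"
  unfolding t_coef_def
  by (intro sum.cong refl) (simp add: alP_eq_cyc_al_add_ip cycles_def cis_conv_exp)

lemma rev_cycle_in_zero_index_cycles:
  "c \<in> {c\<in>cycles (msrc src) (mtgt tgt) n. cyc_tau (mtau tau) c = 0}
     \<Longrightarrow> rev_cycle rv c \<in> {c\<in>cycles (msrc src) (mtgt tgt) n. cyc_tau (mtau tau) c = 0}"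
  by (simp add: rev_cycle_in_cycles)

lemma integral_trace_fiberH_diff_eq_t_coef_zero:
  assumes "n \<ge> 1"
  shows "(1 / (2 * pi) ^ CARD('d)) *\<^sub>R
           integral torus (\<lambda>q. trace (mpow (fiberH src tgt tau (\<lambda>_. 0) V q) n
                                        - mpow (fiberH src tgt tau al V q) n))
         = t_coef src tgt rv al tau V m blat bzero n 0"
  unfolding integral_trace_fiberH_diff[OF assms] t_coef_zero_eq_sum
  using sum_rev_cycle[OF rev_cycle_in_zero_index_cycles,
      where F = "\<lambda>c. complex_of_real (omega src V c) * (1 - cis (cyc_al (mal al) c))"]
  by simp

lemma t_coef_zero_eq_sum_sin:
  "t_coef src tgt rv al tau V m blat bzero n 0
     = complex_of_real (2 * (\<Sum>c\<in>{c\<in>cycles (msrc src) (mtgt tgt) n. cyc_tau (mtau tau) c = 0}.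
                               omega src V c * (sin (cyc_al (mal al) c / 2))\<^sup>2))"
proof -
  let ?S0 = "{c\<in>cycles (msrc src) (mtgt tgt) n. cyc_tau (mtau tau) c = 0}"
  let ?K = "\<lambda>c. complex_of_real (omega src V c) * (1 - cis (- cyc_al (mal al) c))"
  let ?w = "\<lambda>c. omega src V c * (sin (cyc_al (mal al) c / 2))\<^sup>2"
  have "2 * t_coef src tgt rv al tau V m blat bzero n 0 = (\<Sum>c\<in>?S0. ?K c + ?K (rev_cycle rv c))"
    unfolding t_coef_zero_eq_sum
    by (rule sum_symmetrize_rev_cycle[OF rev_cycle_in_zero_index_cycles])
  also have "\<dots> = (\<Sum>c\<in>?S0. 2 * complex_of_real (2 * ?w c))"
  proof (intro sum.cong refl)
    fix c
    have "?K c + ?K (rev_cycle rv c) = complex_of_real (omega src V c)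
            * ((1 - cis (cyc_al (mal al) c)) + (1 - cis (- cyc_al (mal al) c)))"
      by (simp add: algebra_simps)
    then show "?K c + ?K (rev_cycle rv c) = 2 * complex_of_real (2 * ?w c)"
      by (simp add: one_minus_cis_symmetrized)
  qed
  also have "\<dots> = 2 * complex_of_real (2 * (\<Sum>c\<in>?S0. ?w c))"
    by (simp add: sum_distrib_left)
  finally show ?thesis by simp
qed

lemma sum_modified_cycles_1_omega_S:
  "(\<Sum>c\<in>cycles (msrc src) (mtgt tgt) 1. omega src V c * S_fun rv al tau m blat bzero c k)
     = (\<Sum>c\<in>cycles src tgt 1. S_fun rv al tau m blat bzero (map Inl c :: ('e + 'v) list) k)"
  unfolding sum_modified_cycles_1 by simp

lemma sum_modified_cycles_2_omega_S:
  "(\<Sum>c\<in>cycles (msrc src) (mtgt tgt) 2. omega src V c * S_fun rv al tau m blat bzero c k)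
     = 2 * (\<Sum>c\<in>cycles src tgt 1.
              vpot src V (src (hd c)) * S_fun rv al tau m blat bzero (map Inl c :: ('e + 'v) list) k)
       + (\<Sum>c\<in>cycles src tgt 2.
            S_fun rv al tau m blat bzero (map Inl c :: ('e + 'v) list) k)"
  unfolding sum_modified_cycles_2 sum_cycles_1 by (simp add: sum_distrib_left add.commute)

lemma trace_fiberH_diff_shifted_1:
  "trace (fiberH src tgt tau (\<lambda>_. 0) V k - fiberH src tgt tau al V (k + k_o al blat))
     = complex_of_real
         (\<Sum>c\<in>cycles src tgt 1. S_fun rv al tau m blat bzero (map Inl c :: ('e + 'v) list) k)"
  using trace_fiberH_diff_shifted_eq_sum_S[of 1 V k]
  by (simp only: mpow_1 order_refl of_real_sum[symmetric] sum_modified_cycles_1_omega_S)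

lemma trace_fiberH_diff_shifted_2:
  "trace (mpow (fiberH src tgt tau (\<lambda>_. 0) V k) 2
          - mpow (fiberH src tgt tau al V (k + k_o al blat)) 2)
     = complex_of_real
         (2 * (\<Sum>c\<in>cycles src tgt 1.
                 vpot src V (src (hd c)) * S_fun rv al tau m blat bzero (map Inl c :: ('e + 'v) list) k)
          + (\<Sum>c\<in>cycles src tgt 2. S_fun rv al tau m blat bzero (map Inl c :: ('e + 'v) list) k))"
  using trace_fiberH_diff_shifted_eq_sum_S[of 2 V k]
  by (simp only: one_le_numeral of_real_sum[symmetric] sum_modified_cycles_2_omega_S)

lemma integral_trace_fiberH_diff_1:
  "(1 / (2 * pi) ^ CARD('d)) *\<^sub>R
     integral torus (\<lambda>q. trace (fiberH src tgt tau (\<lambda>_. 0) V q - fiberH src tgt tau al V q))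
     = complex_of_real
         (2 * (\<Sum>c\<in>{c\<in>cycles src tgt 1. cyc_tau tau c = 0}. (sin (cyc_al al c / 2))\<^sup>2))"
  using integral_trace_fiberH_diff_eq_t_coef_zero[of 1 V]
  by (simp only: mpow_1 order_refl t_coef_zero_eq_sum_sin sum_zero_index_modified_cycles_1)

lemma integral_trace_fiberH_diff_2:
  "(1 / (2 * pi) ^ CARD('d)) *\<^sub>R
     integral torus (\<lambda>q. trace (mpow (fiberH src tgt tau (\<lambda>_. 0) V q) 2
                                 - mpow (fiberH src tgt tau al V q) 2))
     = complex_of_real
         (4 * (\<Sum>c\<in>{c\<in>cycles src tgt 1. cyc_tau tau c = 0}.
                 vpot src V (src (hd c)) * (sin (cyc_al al c / 2))\<^sup>2)
          + 2 * (\<Sum>c\<in>{c\<in>cycles src tgt 2. cyc_tau tau c = 0}. (sin (cyc_al al c / 2))\<^sup>2))"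
  using integral_trace_fiberH_diff_eq_t_coef_zero[of 2 V]
  by (simp add: t_coef_zero_eq_sum_sin sum_zero_index_modified_cycles_2)

end

theorem corollary3p11:
  fixes src tgt :: "'e::finite \<Rightarrow> 'v::finite"
    and rv :: "'e \<Rightarrow> 'e"
    and tau :: "'e \<Rightarrow> int^'d::finite"
    and al :: "'e \<Rightarrow> real"
    and V :: "'v \<Rightarrow> real"
    and blat :: "'d \<Rightarrow> 'e \<Rightarrow> int"
    and bzero :: "nat \<Rightarrow> 'e \<Rightarrow> int"
    and n :: nat and k :: "real^'d"
  defines "m \<equiv> betti TYPE('e) TYPE('v) - CARD('d)"
  defines "H \<equiv> fiberH src tgt tau al V"
  defines "H0 \<equiv> fiberH src tgt tau (\<lambda>_. 0) V"
  defines "S \<equiv> S_fun rv al tau m blat bzero"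
  defines "Ct \<equiv> cycles (msrc src) (mtgt tgt)"
  defines "C \<equiv> cycles src tgt"
  defines "ko \<equiv> k_o al blat"
  defines "t \<equiv> t_coef src tgt rv al tau V m blat bzero"
  assumes graph: "periodic_graph src tgt rv tau al"
    and basis: "cycle_basis src rv tau m blat bzero"
    and n_pos: "n \<ge> 1"
  shows
    "trace (mpow (H0 k) n - mpow (H (k + ko)) n)
       = (\<Sum>c\<in>Ct n. complex_of_real (omega src V c * S c k))
   \<and> trace (mpow (H0 k) n - mpow (H (k + ko)) n)
       = (\<Sum>mm\<in>{mm :: int^'d. norm (realvec mm) \<le> real n * tau_plus tau}.
            t n mm * exp (- \<i> * complex_of_real (ip mm k)))
   \<and> (1 / (2 * pi) ^ CARD('d)) *\<^sub>R integral torus (\<lambda>q. trace (mpow (H0 q) n - mpow (H q) n))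
       = t n 0
   \<and> t n 0 = complex_of_real (2 * (\<Sum>c\<in>{c\<in>Ct n. cyc_tau (mtau tau) c = 0}.
                                   omega src V c * (sin (cyc_al (mal al) c / 2))\<^sup>2))
   \<and> trace (H0 k - H (k + ko)) = complex_of_real (\<Sum>c\<in>C 1. S (map Inl c) k)
   \<and> trace (mpow (H0 k) 2 - mpow (H (k + ko)) 2)
       = complex_of_real (2 * (\<Sum>c\<in>C 1. vpot src V (src (hd c)) * S (map Inl c) k)
                          + (\<Sum>c\<in>C 2. S (map Inl c) k))
   \<and> (1 / (2 * pi) ^ CARD('d)) *\<^sub>R integral torus (\<lambda>q. trace (H0 q - H q))
       = complex_of_real (2 * (\<Sum>c\<in>{c\<in>C 1. cyc_tau tau c = 0}. (sin (cyc_al al c / 2))\<^sup>2))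
   \<and> 2 * (\<Sum>c\<in>{c\<in>C 1. cyc_tau tau c = 0}. (sin (cyc_al al c / 2))\<^sup>2) \<ge> 0
   \<and> (1 / (2 * pi) ^ CARD('d)) *\<^sub>R integral torus (\<lambda>q. trace (mpow (H0 q) 2 - mpow (H q) 2))
       = complex_of_real (4 * (\<Sum>c\<in>{c\<in>C 1. cyc_tau tau c = 0}.
                                 vpot src V (src (hd c)) * (sin (cyc_al al c / 2))\<^sup>2)
                          + 2 * (\<Sum>c\<in>{c\<in>C 2. cyc_tau tau c = 0}. (sin (cyc_al al c / 2))\<^sup>2))"
proof -
  interpret quotient_graph_with_basis src tgt rv tau al m blat bzero
    by (intro quotient_graph_with_basis.intro quotient_graph.intro
        quotient_graph_with_basis_axioms.intro graph basis)
  show ?thesis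
    unfolding H_def H0_def S_def Ct_def C_def ko_def t_def
    by (intro conjI
        trace_fiberH_diff_shifted_eq_sum_S[OF n_pos] trace_fiberH_diff_shifted_eq_fourier_sum[OF n_pos]
        integral_trace_fiberH_diff_eq_t_coef_zero[OF n_pos] t_coef_zero_eq_sum_sin
        trace_fiberH_diff_shifted_1 trace_fiberH_diff_shifted_2
        integral_trace_fiberH_diff_1 integral_trace_fiberH_diff_2)
      (simp add: sum_nonneg)
qed

end
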